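(* Let $H$ be an ASC-hypergraph on the carrier $\{1,\dots,d+1\}$ with $d\ge0$, and let $\{v\}$ be a vertex of the polytope $\mathcal G(H)$. Then there is a construction $K$ of $H$ such that $\{v\}=\bigcap\{\pi_X\mid X\in K\}$ and $v\notin\pi_Y$ for every $Y\in H\setminus K$.
   Context: A hypergraph is a finite set $H$ of nonempty subsets of some finite set; its carrier is $\bigcup H$. For a family $F$ and set $Y$, $F_Y=\{X\in F\mid X\subseteq Y\}$. A hypergraph partition of $H$ is a partition $\{H_1,\dots,H_n\}$ ($n\ge0$) of the set $H$ with $\{\bigcup H_1,\dots,\bigcup H_n\}$ a partition of $\bigcup H$; $H$ is connected if it has exactly one hypergraph partition; the finest hypergraph partition is the unique one whose blocks are connected. $H$ is atomic if $\{x\}\in H$ for all $x\in\bigcup H$; saturated if $X_1,X_2\in H$ with $X_1\cap X_2\neq\emptyset$ imply $X_1\cup X_2\in H$. An ASC-hypergraph is one that is atomic, saturated and connected. Constructions of an atomic $H$, by induction on $|\bigcup H|$: (0) $\emptyset$ is the only construction of $\emptyset$; (1) if $|\bigcup H|\ge1$, $H$ connected, $x\in\bigcup H$, $K$ a construction of $H_{\bigcup H\setminus\{x\}}$, then $K\cup\{\bigcup H\}$ is a construction of $H$; (2) if $H$ is not connected with finest hypergraph partition $\{H_1,\dots,H_n\}$, $n\ge2$, and $K_i$ is a construction of $H_i$, then $K_1\cup\dots\cup K_n$ is a construction of $H$. For $X\in H$ let $\pi_X=\{(x_1,\dots,x_{d+1})\in\mathbb R^{d+1}\mid\sum_{i\in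 X}x_i=3^{|X|}\}$ and $\pi_X^+=\{(x_1,\dots,x_{d+1})\in\mathbb R^{d+1}\mid\sum_{i\in X}x_i\ge3^{|X|}\}$. Define the convex polytope $\mathcal G(H)=\bigcap\{\pi_X^+\mid X\in H\setminus\{\bigcup H\}\}\cap\pi_{\bigcup H}$. *)

theory Defs
  imports "HOL-Analysis.Analysis"
begin

definition hypergraph :: "'a set set \<Rightarrow> bool" where
  "hypergraph H \<longleftrightarrow> finite H \<and> {} \<notin> H \<and> finite (\<Union>H)"

definition restr :: "'a set set \<Rightarrow> 'a set \<Rightarrow> 'a set set" where
  "restr F Y = {X \<in> F. X \<subseteq> Y}"

text \<open>Hypergraph partition: P is a partition of the set H, and the unions of the
  (distinct) blocks form a partition of the carrier (nonemptiness of the unions is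
  automatic since blocks are nonempty and edges are nonempty; covering is automatic).\<close>
definition hpartition :: "'a set set \<Rightarrow> 'a set set set \<Rightarrow> bool" where
  "hpartition H P \<longleftrightarrow>
     (\<forall>B\<in>P. B \<noteq> {}) \<and> \<Union>P = H \<and>
     (\<forall>B\<in>P. \<forall>C\<in>P. B \<noteq> C \<longrightarrow> B \<inter> C = {}) \<and>
     (\<forall>B\<in>P. \<forall>C\<in>P. B \<noteq> C \<longrightarrow> \<Union>B \<inter> \<Union>C = {}) \<and>
     (\<forall>B\<in>P. \<Union>B \<noteq> {})"

definition hconnected :: "'a set set \<Rightarrow> bool" where
  "hconnected H \<longleftrightarrow> (\<exists>!P. hpartition H P)"

definition finest_hpartition :: "'a set set \<Rightarrow> 'a set set set \<Rightarrow> bool" where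
  "finest_hpartition H P \<longleftrightarrow> hpartition H P \<and> (\<forall>B\<in>P. hconnected B)"

definition atomic :: "'a set set \<Rightarrow> bool" where
  "atomic H \<longleftrightarrow> (\<forall>x\<in>\<Union>H. {x} \<in> H)"

definition saturated :: "'a set set \<Rightarrow> bool" where
  "saturated H \<longleftrightarrow> (\<forall>X1\<in>H. \<forall>X2\<in>H. X1 \<inter> X2 \<noteq> {} \<longrightarrow> X1 \<union> X2 \<in> H)"

definition ASC :: "'a set set \<Rightarrow> bool" where
  "ASC H \<longleftrightarrow> hypergraph H \<and> atomic H \<and> saturated H \<and> hconnected H"

inductive construction :: "'a set set \<Rightarrow> 'a set set \<Rightarrow> bool" where
  empty: "construction {} {}"
| conn: "\<lbrakk>atomic H; \<Union>H \<noteq> {}; hconnected H; x \<in> \<Union>H;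
          construction (restr H (\<Union>H - {x})) K\<rbrakk>
         \<Longrightarrow> construction H (insert (\<Union>H) K)"
| disconn: "\<lbrakk>atomic H; \<not> hconnected H; finest_hpartition H P; card P \<ge> 2;
             \<forall>B\<in>P. construction B (Kf B)\<rbrakk>
         \<Longrightarrow> construction H (\<Union>B\<in>P. Kf B)"

definition hplane :: "'n set \<Rightarrow> (real^'n) set" where
  "hplane X = {x. (\<Sum>i\<in>X. x $ i) = 3 ^ card X}"

definition hhalf :: "'n set \<Rightarrow> (real^'n) set" where
  "hhalf X = {x. (\<Sum>i\<in>X. x $ i) \<ge> 3 ^ card X}"

definition GH :: "'n set set \<Rightarrow> (real^'n) set" where
  "GH H = \<Inter>(hhalf ` (H - {\<Union>H})) \<inter> hplane (\<Union>H)"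

end

theory Submission
  imports Defs
begin

(* Fix an ASC-hypergraph H on the finite carrier UNIV and a vertex v of G(H).  Call X in H
   tight if v lies on the hyperplane pi_X.  The proof has three ingredients.

   (1) Hypergraph facts about the maximal edges (maxel) of a finite saturated hypergraph G:
       they are pairwise disjoint, the restrictions of G to them form its finest hypergraph
       partition, G is connected exactly when its carrier is an edge, and constructions of
       the blocks glue to a construction of G.
   (2) Geometry of the vertex v: tight sets are laminar (3^|X| is strictly supermodular and
       H is saturated), no edge is a disjoint union of two or more tight sets, and since v is
       an extreme point, a direction w summing to zero on every tight set must vanish.
   (3) Induction on |C| for tight C: the maximal tight proper subsets of C miss exactly one
       point x of C (at most one by (2) applied to e_a - e_b), the blocks of H restricted
       to C - {x} are tight, and the tight sets inside C form a construction of H restricted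
       to C (rule conn applied to the glued constructions of the blocks).

   With C = UNIV this gives the construction K of tight sets; by (2) the hyperplanes of K
   meet exactly in v, and by definition v lies on no hyperplane of a non-tight edge. *)

lemma pow3_add_less:
  fixes a b :: nat
  assumes "1 \<le> a" "1 \<le> b"
  shows "(3::real)^a + 3^b < 3^(a+b)"
proof -
  have a: "(3::real)^1 \<le> 3^a" using assms(1) by (intro power_increasing) auto
  have b: "(3::real)^1 \<le> 3^b" using assms(2) by (intro power_increasing) auto
  have "2 * 2 \<le> ((3::real)^a - 1) * (3^b - 1)"
    using a b by (intro mult_mono) auto
  then show ?thesis by (simp add: power_add algebra_simps)
qed

lemma sum_pow3_le:
  fixes f :: "'a \<Rightarrow> nat"
  assumes "finite F" "F \<noteq> {}" "\<forall>M\<in>F. 1 \<le> f M"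
  shows "(\<Sum>M\<in>F. (3::real)^f M) \<le> 3^(\<Sum>M\<in>F. f M)"
  using assms
proof (induction F rule: finite_ne_induct)
  case (insert x F)
  obtain y where y: "y \<in> F" using insert by blast
  have "1 \<le> (\<Sum>M\<in>F. f M)"
    using insert y member_le_sum[of y F f] by auto
  then have "(3::real)^f x + 3^(\<Sum>M\<in>F. f M) < 3^(f x + (\<Sum>M\<in>F. f M))"
    using insert by (intro pow3_add_less) auto
  then show ?case using insert by simp
qed simp

lemma sum_pow3_less:
  fixes f :: "'a \<Rightarrow> nat"
  assumes "finite F" "2 \<le> card F" "\<forall>M\<in>F. 1 \<le> f M"
  shows "(\<Sum>M\<in>F. (3::real)^f M) < 3^(\<Sum>M\<in>F. f M)"
proof -
  obtain x where x: "x \<in> F" using assms by fastforce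
  let ?F = "F - {x}"
  have fin: "finite ?F" using assms by simp
  have "1 \<le> card ?F" using assms x by (simp add: card_Diff_singleton)
  then have ne: "?F \<noteq> {}" by (metis card.empty not_one_le_zero)
  then obtain y where y: "y \<in> ?F" by blast
  have s: "1 \<le> (\<Sum>M\<in>?F. f M)" using assms y member_le_sum[of y ?F f] by auto
  have "(\<Sum>M\<in>F. (3::real)^f M) = 3^f x + (\<Sum>M\<in>?F. 3^f M)"
    using assms x by (simp add: sum.remove)
  also have "\<dots> \<le> 3^f x + 3^(\<Sum>M\<in>?F. f M)" using sum_pow3_le[OF fin ne] assms by simp
  also have "\<dots> < 3^(f x + (\<Sum>M\<in>?F. f M))" using pow3_add_less assms x s by simp
  also have "\<dots> = 3^(\<Sum>M\<in>F. f M)" using assms x by (simp add: sum.remove)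
  finally show ?thesis .
qed

lemma finite_card_cases:
  assumes "finite A"
  obtains "A = {}" | x where "A = {x}" | "2 \<le> card A"
proof (cases "2 \<le> card A")
  case False
  then have "card A = 0 \<or> card A = 1" by linarith
  then show ?thesis using assms that by (auto simp: card_1_singleton_iff)
next
  case True
  then show ?thesis using that by blast
qed

(* A hypergraph containing its own carrier as an edge is connected: the block of any
   hypergraph partition containing that edge already covers the whole carrier. *)
lemma hconnected_if_carrier_edge:
  assumes "D \<in> G" "\<Union>G = D" "{} \<notin> G"
  shows "hconnected G"
proof -
  have part: "hpartition G {G}" unfolding hpartition_def using assms by auto
  have "P = {G}" if P: "hpartition G P" for P
  proof -
    have cov: "\<Union>P = G" and disj: "\<forall>B\<in>P. \<forall>C\<in>P. B \<noteq> C \<longrightarrow> \<Union>B \<inter> \<Union>C = {}"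
      and ne: "\<forall>B\<in>P. \<Union>B \<noteq> {}" using P unfolding hpartition_def by auto
    obtain B where B: "B \<in> P" "D \<in> B" using cov assms by auto
    have "B' = B" if B': "B' \<in> P" for B'
    proof (rule ccontr)
      assume "B' \<noteq> B"
      then have "\<Union>B' \<inter> \<Union>B = {}" using disj B' B by blast
      moreover have "\<Union>B' \<subseteq> D" using cov B' assms(2) by blast
      moreover have "D \<subseteq> \<Union>B" using B by blast
      ultimately have "\<Union>B' = {}" by blast
      then show False using ne B' by blast
    qed
    then have "P = {B}" using B by blast
    then show ?thesis using cov by simp
  qed
  then show ?thesis unfolding hconnected_def using part by blast
qed

definition maxel :: "'a set set \<Rightarrow> 'a set set" where
  "maxel G = {D\<in>G. \<forall>D'\<in>G. D \<subseteq> D' \<longrightarrow> D' = D}"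

lemma maxel_sub: "maxel G \<subseteq> G"
  unfolding maxel_def by auto

lemma maxel_maximal: "D \<in> maxel G \<Longrightarrow> D' \<in> G \<Longrightarrow> D \<subseteq> D' \<Longrightarrow> D' = D"
  unfolding maxel_def by blast

lemma maxel_cover:
  assumes "finite G" "X \<in> G"
  shows "\<exists>D\<in>maxel G. X \<subseteq> D"
proof -
  obtain D where "D \<in> G" "X \<subseteq> D" "\<forall>D'\<in>G. D \<subseteq> D' \<longrightarrow> D = D'"
    using finite_has_maximal2[OF assms] by blast
  then show ?thesis unfolding maxel_def by auto
qed

lemma maxel_Union:
  assumes "finite G"
  shows "\<Union>(maxel G) = \<Union>G"
  using maxel_cover[OF assms] maxel_sub by blast

(* Maximal members are disjoint as soon as any two intersecting members lie in a common
   member; this covers saturated hypergraphs and laminar families alike. *)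
lemma maxel_disjoint:
  assumes "\<forall>X\<in>G. \<forall>Y\<in>G. X \<inter> Y \<noteq> {} \<longrightarrow> (\<exists>Z\<in>G. X \<union> Y \<subseteq> Z)"
    and "D1 \<in> maxel G" "D2 \<in> maxel G" "D1 \<noteq> D2"
  shows "D1 \<inter> D2 = {}"
proof (rule ccontr)
  assume "D1 \<inter> D2 \<noteq> {}"
  moreover have "D1 \<in> G" "D2 \<in> G" using assms(2,3) maxel_sub by blast+
  ultimately obtain Z where Z: "Z \<in> G" "D1 \<union> D2 \<subseteq> Z"
    using assms(1) by blast
  have "Z = D1" "Z = D2" using assms(2,3) Z unfolding maxel_def by auto
  then show False using assms(4) by simp
qed

lemma maxel_disjoint_saturated:
  assumes "saturated G" "D1 \<in> maxel G" "D2 \<in> maxel G" "D1 \<noteq> D2"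
  shows "D1 \<inter> D2 = {}"
proof (rule maxel_disjoint[OF _ assms(2-4)])
  show "\<forall>X\<in>G. \<forall>Y\<in>G. X \<inter> Y \<noteq> {} \<longrightarrow> (\<exists>Z\<in>G. X \<union> Y \<subseteq> Z)"
    using assms(1) unfolding saturated_def by blast
qed

lemma Union_restr: "D \<in> G \<Longrightarrow> \<Union>(restr G D) = D"
  unfolding restr_def by auto

lemma restr_restr: "A \<subseteq> B \<Longrightarrow> restr (restr G B) A = restr G A"
  unfolding restr_def by auto

lemma atomic_restr: "atomic H \<Longrightarrow> atomic (restr H Y)"
  unfolding atomic_def restr_def by auto

lemma saturated_restr: "saturated H \<Longrightarrow> saturated (restr H Y)"
  unfolding saturated_def restr_def by auto

lemma maxel_finest_hpartition:
  assumes "finite G" "{} \<notin> G" "saturated G"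
  shows "finest_hpartition G (restr G ` maxel G)" and "inj_on (restr G) (maxel G)"
proof -
  have U: "\<Union>(restr G D) = D" if "D \<in> maxel G" for D
    using that maxel_sub Union_restr by blast
  show "inj_on (restr G) (maxel G)"
    by (rule inj_onI) (metis U)
  have "hpartition G (restr G ` maxel G)"
    unfolding hpartition_def
  proof (intro conjI ballI impI)
    fix B assume "B \<in> restr G ` maxel G"
    then obtain D where "D \<in> maxel G" "B = restr G D" by blast
    then have "D \<in> B" "D \<noteq> {}" using maxel_sub assms(2) unfolding restr_def by auto
    then show "B \<noteq> {}" "\<Union>B \<noteq> {}" by auto
  next
    show "\<Union>(restr G ` maxel G) = G"
      using maxel_cover[OF assms(1)] unfolding restr_def by blast
  next
    fix B C assume "B \<in> restr G ` maxel G" "C \<in> restr G ` maxel G" "B \<noteq> C"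
    then obtain D E where D: "D \<in> maxel G" "B = restr G D" and E: "E \<in> maxel G" "C = restr G E"
      and "D \<noteq> E" by blast
    then have DE: "D \<inter> E = {}" using maxel_disjoint_saturated[OF assms(3)] by blast
    then show "\<Union>B \<inter> \<Union>C = {}" using U D E by simp
    show "B \<inter> C = {}"
    proof (rule ccontr)
      assume "B \<inter> C \<noteq> {}"
      then obtain X where "X \<in> B" "X \<in> C" by blast
      then have "X \<subseteq> D \<inter> E" "X \<in> G" using D E unfolding restr_def by auto
      then show False using DE assms(2) by auto
    qed
  qed
  moreover have "hconnected (restr G D)" if "D \<in> maxel G" for D
    using that U[OF that] assms(2) maxel_sub
    by (intro hconnected_if_carrier_edge[of D]) (auto simp: restr_def)
  ultimately show "finest_hpartition G (restr G ` maxel G)"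
    unfolding finest_hpartition_def by auto
qed

lemma hconnected_unique:
  assumes "hconnected G" "hpartition G P" "hpartition G Q"
  shows "P = Q"
  using assms(1) unfolding hconnected_def
proof (elim ex1E)
  fix P0 assume "\<forall>P'. hpartition G P' \<longrightarrow> P' = P0"
  then show "P = Q" using assms(2,3) by blast
qed

(* With two or more maximal edges the block partition differs from the trivial one. *)
lemma not_hconnected_if_many_maxel:
  assumes "finite G" "{} \<notin> G" "saturated G" "2 \<le> card (maxel G)"
  shows "\<not> hconnected G"
proof
  assume conn: "hconnected G"
  have P: "hpartition G (restr G ` maxel G)" and inj: "inj_on (restr G) (maxel G)"
    using maxel_finest_hpartition[OF assms(1-3)] unfolding finest_hpartition_def by auto
  obtain D where "D \<in> maxel G" using assms(4) by fastforce
  then have "D \<in> G" "D \<noteq> {}" using maxel_sub assms(2) by auto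
  then have "hpartition G {G}" unfolding hpartition_def by auto
  then have "restr G ` maxel G = {G}" using hconnected_unique[OF conn P] by simp
  then have "card (maxel G) = 1" using card_image[OF inj] by simp
  then show False using assms(4) by simp
qed

lemma carrier_edge_if_hconnected:
  assumes "finite G" "{} \<notin> G" "saturated G" "hconnected G" "G \<noteq> {}"
  shows "\<Union>G \<in> G"
proof -
  have fin: "finite (maxel G)" by (rule finite_subset[OF maxel_sub assms(1)])
  from fin show ?thesis
  proof (cases rule: finite_card_cases)
    case 1
    then show ?thesis using maxel_cover[OF assms(1)] assms(5) by blast
  next
    case (2 D)
    then have "D = \<Union>G" using maxel_Union[OF assms(1)] by simp
    moreover have "D \<in> G" using 2 maxel_sub[of G] by blast
    ultimately show ?thesis by simp
  next
    case 3
    then show ?thesis using not_hconnected_if_many_maxel assms by blast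
  qed
qed

lemma construction_from_blocks:
  assumes "finite G" "{} \<notin> G" "saturated G" "atomic G"
    and blocks: "\<forall>D\<in>maxel G. construction (restr G D) (K D)"
  shows "construction G (\<Union>D\<in>maxel G. K D)"
proof -
  have fin: "finite (maxel G)" by (rule finite_subset[OF maxel_sub assms(1)])
  from fin show ?thesis
  proof (cases rule: finite_card_cases)
    case 1
    then have "G = {}" using maxel_cover[OF assms(1)] by blast
    then show ?thesis using 1 construction.empty by simp
  next
    case (2 D)
    then have "restr G D = G" using maxel_cover[OF assms(1)] unfolding restr_def by blast
    then show ?thesis using 2 blocks by simp
  next
    case 3
    let ?P = "restr G ` maxel G"
    have fp: "finest_hpartition G ?P" and inj: "inj_on (restr G) (maxel G)"
      using maxel_finest_hpartition[OF assms(1-3)] by auto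
    have U: "\<Union>(restr G D) = D" if "D \<in> maxel G" for D
      using that maxel_sub Union_restr by blast
    have "construction G (\<Union>B\<in>?P. K (\<Union>B))"
    proof (rule construction.disconn[OF assms(4) _ fp])
      show "\<not> hconnected G" using not_hconnected_if_many_maxel assms(1-3) 3 by blast
      show "2 \<le> card ?P" using 3 card_image[OF inj] by simp
      show "\<forall>B\<in>?P. construction B (K (\<Union>B))" using blocks U by auto
    qed
    moreover have "(\<Union>B\<in>?P. K (\<Union>B)) = (\<Union>D\<in>maxel G. K D)" using U by simp
    ultimately show ?thesis by simp
  qed
qed

lemma construction_insert_edge:
  assumes "atomic H" "{} \<notin> H" "C \<in> H" "x \<in> C"
    and "construction (restr H (C - {x})) K"
  shows "construction (restr H C) (insert C K)"
proof -
  have U: "\<Union>(restr H C) = C" using Union_restr[OF assms(3)] .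
  have "construction (restr H C) (insert (\<Union>(restr H C)) K)"
  proof (rule construction.conn)
    show "atomic (restr H C)" using assms(1) by (rule atomic_restr)
    show "hconnected (restr H C)"
      using assms(2,3) U by (intro hconnected_if_carrier_edge[of C]) (auto simp: restr_def)
    show "construction (restr (restr H C) (\<Union>(restr H C) - {x})) K"
      using assms(5) U restr_restr[of "C - {x}" C H] by auto
  qed (use U assms(4) in auto)
  then show ?thesis using U by simp
qed

locale GH_vertex =
  fixes H :: "('n::finite) set set" and v :: "real^'n"
  assumes ASC: "ASC H" and carrier: "\<Union>H = UNIV" and extreme: "v extreme_point_of GH H"
begin

lemma no_empty: "{} \<notin> H" and saturated: "saturated H" and atomic: "atomic H"
  and singleton_edge: "{i} \<in> H"
  using ASC carrier unfolding ASC_def hypergraph_def atomic_def by auto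

lemma UNIV_edge: "UNIV \<in> H"
proof -
  have "H \<noteq> {}" using singleton_edge by blast
  then show ?thesis
    using carrier_edge_if_hconnected[OF _ no_empty saturated] ASC carrier
    unfolding ASC_def by simp
qed

(* Since UNIV is an edge, G(H) is cut out by all edge constraints and the UNIV hyperplane. *)
lemma GH_iff: "y \<in> GH H \<longleftrightarrow>
    (\<forall>X\<in>H. 3^card X \<le> (\<Sum>i\<in>X. y$i)) \<and> (\<Sum>i\<in>UNIV. y$i) = 3^CARD('n)"
  unfolding GH_def carrier hhalf_def hplane_def using UNIV_edge by (auto intro: eq_refl)

lemma feasible: "X \<in> H \<Longrightarrow> 3^card X \<le> (\<Sum>i\<in>X. v$i)"
  using extreme GH_iff unfolding extreme_point_of_def by blast

definition tight :: "'n set \<Rightarrow> bool" where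
  "tight X \<longleftrightarrow> (\<Sum>i\<in>X. v$i) = 3^card X"

lemma tight_UNIV: "tight UNIV"
  using extreme GH_iff unfolding extreme_point_of_def tight_def by simp

lemma coord_pos: "0 < v$i"
  using feasible[OF singleton_edge[of i]] by simp

(* Tight edges form a laminar family: their union would be an edge whose constraint fails. *)
lemma tight_laminar:
  assumes "X \<in> H" "Y \<in> H" "tight X" "tight Y" "X \<inter> Y \<noteq> {}"
  shows "X \<subseteq> Y \<or> Y \<subseteq> X"
proof (rule ccontr)
  assume nested: "\<not> (X \<subseteq> Y \<or> Y \<subseteq> X)"
  have "X \<union> Y \<in> H" using saturated assms unfolding saturated_def by blast
  then have U: "3^card (X \<union> Y) \<le> (\<Sum>i\<in>X \<union> Y. v$i)" by (rule feasible)
  have eq: "(\<Sum>i\<in>X \<union> Y. v$i) + (\<Sum>i\<in>X \<inter> Y. v$i) = (\<Sum>i\<in>X. v$i) + (\<Sum>i\<in>Y. v$i)"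
    by (rule sum.union_inter) auto
  have pos: "0 < (\<Sum>i\<in>X \<inter> Y. v$i)"
    using assms(5) coord_pos by (intro sum_pos) auto
  have "card X < card (X \<union> Y)" "card Y < card (X \<union> Y)"
    using nested by (auto intro: psubset_card_mono)
  then have "(3::real) * 3^card X \<le> 3^card (X \<union> Y)" "(3::real) * 3^card Y \<le> 3^card (X \<union> Y)"
    by (metis Suc_leI one_le_numeral power_Suc power_increasing)+
  moreover have "(0::real) < 3^card X" "(0::real) < 3^card Y" by auto
  ultimately show False using U eq pos assms(3,4) unfolding tight_def by linarith
qed

lemma disjoint_tight_union:
  assumes "F \<subseteq> H" "\<forall>M\<in>F. tight M" "\<forall>M1\<in>F. \<forall>M2\<in>F. M1 \<noteq> M2 \<longrightarrow> M1 \<inter> M2 = {}"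
    and "\<Union>F \<in> H" "\<Union>F \<noteq> {}"
  shows "\<Union>F \<in> F"
proof -
  have fin: "finite F" by simp
  then show ?thesis
  proof (cases rule: finite_card_cases)
    case 1
    then show ?thesis using assms(5) by simp
  next
    case (2 M)
    then show ?thesis by simp
  next
    case 3
    have card_pos: "\<forall>M\<in>F. 1 \<le> card M"
      using assms(1) no_empty by (auto simp: Suc_le_eq card_gt_0_iff)
    have "(\<Sum>i\<in>\<Union>F. v$i) = (\<Sum>M\<in>F. \<Sum>i\<in>M. v$i)"
      using sum.Union_disjoint[of F "\<lambda>i. v$i"] assms(3) by (simp add: o_def)
    also have "\<dots> = (\<Sum>M\<in>F. 3^card M)" using assms(2) unfolding tight_def by simp
    also have "\<dots> < 3^(\<Sum>M\<in>F. card M)" using sum_pow3_less[OF fin 3 card_pos] .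
    also have "(\<Sum>M\<in>F. card M) = card (\<Union>F)"
    proof -
      have "pairwise disjnt F" using assms(3) unfolding pairwise_def disjnt_def by blast
      then show ?thesis by (simp add: card_Union_disjoint)
    qed
    finally have False using feasible[OF assms(4)] by linarith
    then show ?thesis ..
  qed
qed

(* Non-tight constraints have positive slack, so moving v by a small multiple of a direction
   w that keeps every tight sum fixed stays inside G(H). *)
lemma small_moves_stay_in_GH:
  fixes w :: "real^'n"
  assumes zero: "\<And>X. X \<in> H \<Longrightarrow> tight X \<Longrightarrow> (\<Sum>i\<in>X. w$i) = 0"
  obtains e where "0 < e" "\<And>c. \<bar>c\<bar> \<le> e \<Longrightarrow> v + c *\<^sub>R w \<in> GH H"
proof -
  define slack where "slack X = (\<Sum>i\<in>X. v$i) - 3^card X" for X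
  define B where "B = 1 + (\<Sum>i\<in>UNIV. \<bar>w$i\<bar>)"
  define m where "m = Min (insert 1 (slack ` {X\<in>H. \<not> tight X}))"
  define e where "e = m / (2 * B)"
  have B_pos: "0 < B" unfolding B_def by (simp add: add_pos_nonneg sum_nonneg)
  have slack_pos: "0 < slack X" if "X \<in> H" "\<not> tight X" for X
    using that feasible unfolding slack_def tight_def by (auto simp: less_le)
  have m_pos: "0 < m" unfolding m_def using slack_pos by auto
  have m_le: "m \<le> slack X" if "X \<in> H" "\<not> tight X" for X
    unfolding m_def using that by (intro Min_le) auto
  have w_bound: "\<bar>\<Sum>i\<in>X. w$i\<bar> \<le> B" for X
  proof -
    have "\<bar>\<Sum>i\<in>X. w$i\<bar> \<le> (\<Sum>i\<in>X. \<bar>w$i\<bar>)" by (rule sum_abs)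
    also have "\<dots> \<le> (\<Sum>i\<in>UNIV. \<bar>w$i\<bar>)" by (intro sum_mono2) auto
    finally show ?thesis unfolding B_def by simp
  qed
  have "v + c *\<^sub>R w \<in> GH H" if c: "\<bar>c\<bar> \<le> e" for c
  proof -
    have sum_shift: "(\<Sum>i\<in>X. (v + c *\<^sub>R w)$i) = (\<Sum>i\<in>X. v$i) + c * (\<Sum>i\<in>X. w$i)" for X
      by (simp add: sum.distrib sum_distrib_left)
    have "3^card X \<le> (\<Sum>i\<in>X. (v + c *\<^sub>R w)$i)" if X: "X \<in> H" for X
    proof (cases "tight X")
      case True then show ?thesis using zero[OF X True] feasible[OF X] sum_shift by simp
    next
      case False
      have "\<bar>c * (\<Sum>i\<in>X. w$i)\<bar> \<le> e * B"
        unfolding abs_mult using c w_bound by (intro mult_mono) auto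
      also have "\<dots> < slack X"
        using m_le[OF X False] m_pos B_pos unfolding e_def by simp
      finally show ?thesis unfolding sum_shift slack_def by linarith
    qed
    moreover have "(\<Sum>i\<in>UNIV. (v + c *\<^sub>R w)$i) = 3^CARD('n)"
      using sum_shift[of UNIV] zero[OF UNIV_edge tight_UNIV] tight_UNIV unfolding tight_def by simp
    ultimately show ?thesis unfolding GH_iff by blast
  qed
  moreover have "0 < e" unfolding e_def using m_pos B_pos by simp
  ultimately show ?thesis using that by blast
qed

(* The vertex condition: a direction w with zero sum on every tight edge is zero, since
   otherwise v would be the midpoint of the two points v +- e*w of G(H). *)
lemma tight_directions_zero:
  fixes w :: "real^'n"
  assumes zero: "\<And>X. X \<in> H \<Longrightarrow> tight X \<Longrightarrow> (\<Sum>i\<in>X. w$i) = 0"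
  shows "w = 0"
proof (rule ccontr)
  assume "w \<noteq> 0"
  obtain e where e: "0 < e" and shifted: "\<And>c. \<bar>c\<bar> \<le> e \<Longrightarrow> v + c *\<^sub>R w \<in> GH H"
    using small_moves_stay_in_GH[OF zero] by blast
  have "v + e *\<^sub>R w \<noteq> v + (-e) *\<^sub>R w"
  proof
    assume "v + e *\<^sub>R w = v + (-e) *\<^sub>R w"
    then have "(2 * e) *\<^sub>R w = 0"
      by (metis add_left_cancel scaleR_minus_left eq_neg_iff_add_eq_0 mult_2 scaleR_left_distrib)
    then show False using \<open>w \<noteq> 0\<close> e by simp
  qed
  moreover have "midpoint (v + e *\<^sub>R w) (v + (-e) *\<^sub>R w) = v"
    unfolding midpoint_def by (simp add: vec_eq_iff field_simps)
  ultimately have "v \<in> open_segment (v + e *\<^sub>R w) (v + (-e) *\<^sub>R w)"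
    by (metis midpoint_in_open_segment)
  then show False
    using extreme shifted[of e] shifted[of "-e"] e unfolding extreme_point_of_def by auto
qed

definition tight_within :: "'n set \<Rightarrow> 'n set set" where
  "tight_within C = {X\<in>H. X \<subseteq> C \<and> tight X}"

definition max_tight_below :: "'n set \<Rightarrow> 'n set set" where
  "max_tight_below C = maxel {X\<in>H. X \<subset> C \<and> tight X}"

lemma max_tight_below_cover:
  "X \<in> H \<Longrightarrow> X \<subset> C \<Longrightarrow> tight X \<Longrightarrow> \<exists>M\<in>max_tight_below C. X \<subseteq> M"
  unfolding max_tight_below_def by (intro maxel_cover) auto

lemma max_tight_below_sub: "M \<in> max_tight_below C \<Longrightarrow> M \<in> H \<and> M \<subset> C \<and> tight M"
  using maxel_sub unfolding max_tight_below_def by blast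

(* By laminarity the maximal tight proper subsets of C are pairwise disjoint. *)
lemma max_tight_below_disjoint:
  assumes "M1 \<in> max_tight_below C" "M2 \<in> max_tight_below C" "M1 \<noteq> M2"
  shows "M1 \<inter> M2 = {}"
proof (rule maxel_disjoint[OF _ assms[unfolded max_tight_below_def]])
  let ?F = "{X\<in>H. X \<subset> C \<and> tight X}"
  show "\<forall>X\<in>?F. \<forall>Y\<in>?F. X \<inter> Y \<noteq> {} \<longrightarrow> (\<exists>Z\<in>?F. X \<union> Y \<subseteq> Z)"
  proof (intro ballI impI)
    fix X Y assume X: "X \<in> ?F" and Y: "Y \<in> ?F" and "X \<inter> Y \<noteq> {}"
    then have "X \<subseteq> Y \<or> Y \<subseteq> X" using tight_laminar by blast
    then show "\<exists>Z\<in>?F. X \<union> Y \<subseteq> Z"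
    proof
      assume "X \<subseteq> Y" then show ?thesis using Y by blast
    next
      assume "Y \<subseteq> X" then show ?thesis using X by blast
    qed
  qed
qed

(* Some point of a tight edge C lies in no tight proper subset: otherwise C would be the
   disjoint union of its maximal tight proper subsets. *)
lemma uncovered_nonempty:
  assumes C: "C \<in> H" "tight C"
  shows "C - \<Union>(max_tight_below C) \<noteq> {}"
proof
  assume "C - \<Union>(max_tight_below C) = {}"
  then have "\<Union>(max_tight_below C) = C" using max_tight_below_sub by blast
  moreover have "C \<noteq> {}" using C no_empty by auto
  ultimately have "C \<in> max_tight_below C"
    using disjoint_tight_union[of "max_tight_below C"] C
      max_tight_below_sub max_tight_below_disjoint by auto
  then show False using max_tight_below_sub by blast
qed

(* At most one point of C lies in no tight proper subset: for two such points a, b the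
   direction e_a - e_b sums to zero on every tight edge, by laminarity. *)
lemma uncovered_unique:
  assumes C: "C \<in> H" "tight C"
    and ab: "a \<in> C - \<Union>(max_tight_below C)" "b \<in> C - \<Union>(max_tight_below C)"
  shows "a = b"
proof -
  define w :: "real^'n" where "w = (\<chi> i. (if i = a then 1 else 0) - (if i = b then 1 else 0))"
  have sum_w: "(\<Sum>i\<in>X. w$i) = (if a \<in> X then 1 else 0) - (if b \<in> X then 1 else 0)" for X
    unfolding w_def by (simp add: sum_subtractf sum.delta)
  have "(\<Sum>i\<in>X. w$i) = 0" if X: "X \<in> H" "tight X" for X
  proof (cases "a \<in> X \<or> b \<in> X")
    case True
    then have "X \<subseteq> C \<or> C \<subseteq> X" using tight_laminar[OF X(1) C(1) X(2) C(2)] ab by blast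
    moreover have "\<not> X \<subset> C" using max_tight_below_cover[OF X(1) _ X(2)] True ab by blast
    ultimately have "C \<subseteq> X" by blast
    then show ?thesis unfolding sum_w using ab by auto
  qed (auto simp: sum_w)
  then have "w = 0" by (rule tight_directions_zero)
  then have "w $ a = 0" by simp
  then show ?thesis unfolding w_def by (auto split: if_splits)
qed

lemma uncovered_point:
  assumes C: "C \<in> H" "tight C"
  shows "\<exists>x\<in>C. \<Union>(max_tight_below C) = C - {x}"
proof -
  obtain x where "C - \<Union>(max_tight_below C) = {x}"
    using uncovered_nonempty[OF C] uncovered_unique[OF C] by blast
  moreover have "\<Union>(max_tight_below C) \<subseteq> C" using max_tight_below_sub by blast
  ultimately have "x \<in> C" "\<Union>(max_tight_below C) = C - {x}" by blast+
  then show ?thesis by blast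
qed

(* Every block of H restricted to C - {x} is a maximal tight proper subset of C: by
   saturation and maximality it is a disjoint union of such sets, hence one of them. *)
lemma blocks_are_tight:
  assumes x: "\<Union>(max_tight_below C) = C - {x}"
    and D: "D \<in> maxel (restr H (C - {x}))"
  shows "D \<in> max_tight_below C"
proof -
  have "D \<in> restr H (C - {x})" using D maxel_sub by blast
  then have DH: "D \<in> H" and DC: "D \<subseteq> C - {x}" unfolding restr_def by auto
  let ?F = "{M\<in>max_tight_below C. M \<subseteq> D}"
  have absorbed: "M \<subseteq> D" if M: "M \<in> max_tight_below C" "M \<inter> D \<noteq> {}" for M
  proof -
    have "M \<in> H" using max_tight_below_sub[OF M(1)] by blast
    moreover have "M \<subseteq> C - {x}" using M(1) x by blast
    ultimately have "M \<union> D \<in> restr H (C - {x})"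
      using saturated DH DC M(2) unfolding saturated_def restr_def by blast
    then have "M \<union> D = D" using maxel_maximal[OF D] by blast
    then show ?thesis by blast
  qed
  have D_eq: "D = \<Union>?F"
  proof
    show "D \<subseteq> \<Union>?F"
    proof
      fix y assume y: "y \<in> D"
      then obtain M where M: "M \<in> max_tight_below C" "y \<in> M" using DC x by blast
      then have "M \<subseteq> D" using absorbed y by blast
      then show "y \<in> \<Union>?F" using M by blast
    qed
  qed blast
  have "\<Union>?F \<in> ?F"
  proof (rule disjoint_tight_union)
    show "?F \<subseteq> H" "\<forall>M\<in>?F. tight M" using max_tight_below_sub by blast+
    show "\<forall>M1\<in>?F. \<forall>M2\<in>?F. M1 \<noteq> M2 \<longrightarrow> M1 \<inter> M2 = {}"
      using max_tight_below_disjoint by blast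
    show "\<Union>?F \<in> H" "\<Union>?F \<noteq> {}" using DH no_empty D_eq by auto
  qed
  then show ?thesis using D_eq by simp
qed

lemma tight_within_decompose:
  assumes C: "C \<in> H" "tight C" and x: "\<Union>(max_tight_below C) = C - {x}"
  shows "tight_within C = insert C (\<Union>D\<in>maxel (restr H (C - {x})). tight_within D)"
    (is "_ = insert C (\<Union>D\<in>?Ms. _)")
proof
  have below: "X \<in> (\<Union>D\<in>?Ms. tight_within D)" if X: "X \<in> H" "X \<subset> C" "tight X" for X
  proof -
    obtain M where "M \<in> max_tight_below C" "X \<subseteq> M"
      using max_tight_below_cover[OF X] by blast
    then have "X \<subseteq> C - {x}" using x by blast
    then have "X \<in> restr H (C - {x})" using X(1) unfolding restr_def by blast
    then obtain D where "D \<in> ?Ms" "X \<subseteq> D" using maxel_cover[of "restr H (C - {x})"] by auto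
    then show ?thesis using X unfolding tight_within_def by blast
  qed
  show "tight_within C \<subseteq> insert C (\<Union>D\<in>?Ms. tight_within D)"
  proof
    fix X assume "X \<in> tight_within C"
    then have "X \<in> H" "X \<subseteq> C" "tight X" unfolding tight_within_def by auto
    then show "X \<in> insert C (\<Union>D\<in>?Ms. tight_within D)" using below by blast
  qed
  have inside: "D \<subseteq> C" if "D \<in> ?Ms" for D
    using that maxel_sub[of "restr H (C - {x})"] unfolding restr_def by blast
  show "insert C (\<Union>D\<in>?Ms. tight_within D) \<subseteq> tight_within C"
    using C inside unfolding tight_within_def by blast
qed

lemma construction_tight_within:
  assumes "C \<in> H" "tight C"
  shows "construction (restr H C) (tight_within C)"
  using assms
proof (induction "card C" arbitrary: C rule: less_induct)
  case less
  obtain x where xC: "x \<in> C" and x: "\<Union>(max_tight_below C) = C - {x}"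
    using uncovered_point[OF less.prems] by blast
  let ?H' = "restr H (C - {x})"
  have blocks: "construction (restr ?H' D) (tight_within D)" if D: "D \<in> maxel ?H'" for D
  proof -
    have Dt: "D \<in> max_tight_below C" using blocks_are_tight[OF x D] .
    then have "D \<in> H" "tight D" "D \<subset> C" using max_tight_below_sub by auto
    moreover have "card D < card C" using \<open>D \<subset> C\<close> by (simp add: psubset_card_mono)
    ultimately have "construction (restr H D) (tight_within D)" using less.hyps by blast
    moreover have "D \<subseteq> C - {x}" using Dt x by blast
    ultimately show ?thesis by (simp add: restr_restr)
  qed
  have "construction ?H' (\<Union>D\<in>maxel ?H'. tight_within D)"
  proof (rule construction_from_blocks)
    show "finite ?H'" by simp
    show "{} \<notin> ?H'" using no_empty unfolding restr_def by blast
    show "saturated ?H'" using saturated by (rule saturated_restr)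
    show "atomic ?H'" using atomic by (rule atomic_restr)
  qed (use blocks in blast)
  then have "construction (restr H C) (insert C (\<Union>D\<in>maxel ?H'. tight_within D))"
    by (rule construction_insert_edge[OF atomic no_empty less.prems(1) xC])
  then show ?case using tight_within_decompose[OF less.prems x] by simp
qed

lemma tight_hyperplanes_meet_in_v: "{v} = \<Inter>(hplane ` tight_within UNIV)"
proof
  show "{v} \<subseteq> \<Inter>(hplane ` tight_within UNIV)"
    unfolding tight_within_def tight_def hplane_def by auto
  show "\<Inter>(hplane ` tight_within UNIV) \<subseteq> {v}"
  proof
    fix y assume y: "y \<in> \<Inter>(hplane ` tight_within UNIV)"
    have "(\<Sum>i\<in>X. (y - v)$i) = 0" if X: "X \<in> H" "tight X" for X
    proof -
      have "y \<in> hplane X" using y X unfolding tight_within_def by blast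
      then show ?thesis using X(2) unfolding hplane_def tight_def by (simp add: sum_subtractf)
    qed
    then have "y - v = 0" by (rule tight_directions_zero)
    then show "y \<in> {v}" by simp
  qed
qed

end

theorem proposition9p3:
  fixes H :: "('n::finite) set set" and v :: "real^'n"
  assumes "ASC H"
    and "\<Union>H = UNIV"
    and "{v} face_of GH H"
  shows "\<exists>K. construction H K \<and> {v} = \<Inter>(hplane ` K) \<and> (\<forall>Y\<in>H - K. v \<notin> hplane Y)"
proof -
  interpret GH_vertex H v
    using assms face_of_singleton by unfold_locales blast+
  let ?K = "tight_within UNIV"
  have "construction H ?K"
    using construction_tight_within[OF UNIV_edge tight_UNIV] by (simp add: restr_def)
  moreover have "\<forall>Y\<in>H - ?K. v \<notin> hplane Y"
    unfolding tight_within_def tight_def hplane_def by auto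
  ultimately show ?thesis using tight_hyperplanes_meet_in_v by blast
qed

end
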